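(* Let $0<\beta<1$, $-1<\rho<1$, $\beta_\ast=1-\beta$, $\rho_\ast=\sqrt{1-\rho^2}$, $V>0$ and $a\in\mathbb R$. Define $\beta'=\frac{\beta}{1-\beta_\ast\rho^2}$, $\beta_\ast'=1-\beta'=\frac{\beta_\ast\rho_\ast^2}{1-\beta_\ast\rho^2}$ and $\bar F'=\left|\frac{\beta_\ast'}{\beta_\ast}a\right|^{1/\beta_\ast'}$. Let $F\ge0$ be a random variable with $$\mathrm{Prob}(F\ge y)=P_{\chi^2}\!\left(\frac{a^2}{\beta_\ast^2V};\ \frac{1-\beta_\ast\rho^2}{\beta_\ast\rho_\ast^2},\ \frac{y^{2\beta_\ast}}{\beta_\ast^2V}\right)\quad\text{for all }y>0.$$ Then $Y:=\left(\frac{\beta_\ast'}{\beta_\ast}F^{\beta_\ast}\right)^{1/\beta_\ast'}$ has law $\mathrm{CEV}_{\beta'}(\bar F',V)$, i.e. $\mathrm{Prob}(Y\ge y')=P_{\chi^2}\!\left(\frac{(\bar F')^{2\beta_\ast'}}{\beta_\ast'^2V};\ \frac1{\beta_\ast'},\ \frac{(y')^{2\beta_\ast'}}{\beta_\ast'^2V}\right)$ for all $y'>0$; equivalently $F=(\beta_\ast/\beta_\ast')^{1/\beta_\ast}Y^{\beta_\ast'/\beta_\ast}$. In particular $E\!\left[F^{\beta_\ast/\beta_\ast'}\right]=|a|^{1/\beta_\ast'}$.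
   Context: $P_{\chi^2}(x;\delta,r)$ is the distribution function at $x$ of the noncentral chi-squared law with $\delta$ degrees of freedom and noncentrality $r$. For $0<b<1$, $b_\ast=1-b$, $F_0\ge0$ and $V>0$, $\mathrm{CEV}_b(F_0,V)$ denotes the law at time $1$ of the process $\mathrm{d}F_s=\sqrt V F_s^{b}\,\mathrm{d}B_s$ started at $F_0$ and absorbed at $0$; its complementary distribution function is $\mathrm{Prob}(F_1>y)=P_{\chi^2}\!\left(\frac{F_0^{2b_\ast}}{b_\ast^2V};\frac1{b_\ast},\frac{y^{2b_\ast}}{b_\ast^2V}\right)$ for $y>0$, and its mean is $F_0$. In the SABR application, $a=F_t^{\beta_\ast}+\frac{\beta_\ast\rho}{\nu}(\sigma_{t+h}-\sigma_t)$ and $V=\rho_\ast^2\sigma_t^2hI_t^h$. *)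

theory Defs
  imports "HOL-Probability.Probability"
begin

definition chi2_density :: "real \<Rightarrow> real \<Rightarrow> real" where
  "chi2_density k t =
     (if 0 < t then t powr (k / 2 - 1) * exp (- t / 2) / (2 powr (k / 2) * Gamma (k / 2)) else 0)"

definition chi2_cdf :: "real \<Rightarrow> real \<Rightarrow> real" where
  "chi2_cdf k x = (LINT t:{..x}|lborel. chi2_density k t)"

text \<open>Distribution function at x of the noncentral chi-squared law with delta degrees
  of freedom and noncentrality r (Poisson mixture of central laws).\<close>
definition P_chi2 :: "real \<Rightarrow> real \<Rightarrow> real \<Rightarrow> real" where
  "P_chi2 x \<delta> r = (\<Sum>j. exp (- r / 2) * (r / 2) ^ j / fact j * chi2_cdf (\<delta> + 2 * real j) x)"

end

theory Submission imports Defs begin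

text \<open>With \<open>b = 1 - \<beta>\<close> and \<open>b' = 1 - \<beta>'\<close>, passing from \<open>F\<close> to \<open>Y\<close> is only a change of
  variable in the tail: \<open>Y powr (2 b') / (b'^2 V) = F powr (2 b) / (b^2 V)\<close>, and the degrees of
  freedom \<open>(1 - b \<rho>^2) / (b (1 - \<rho>^2))\<close> are exactly \<open>1 / b'\<close>, so the hypothesis on \<open>F\<close> is
  the CEV tail of \<open>Y\<close>.

  For the moment, \<open>R = F powr (2 b) / (b^2 V)\<close> has tail \<open>P_chi2 x0 (2 k) r\<close> with
  \<open>x0 = a^2 / (b^2 V)\<close> and \<open>k = 1 / (2 b')\<close>. By the layer-cake formula
  \<open>E (R powr k) = \<integral> k r^(k-1) P(R \<ge> r) dr\<close>. Expanding the noncentral law as a Poisson mixture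
  of central ones, Tonelli lets us integrate term by term; each term collapses to an integral over
  \<open>[0, x0]\<close> carrying the same Poisson weight, and summing the weights back leaves
  \<open>\<integral>\<^sub>0\<^sup>x\<^sup>0 k t^(k-1) dt = x0 powr k\<close>.\<close>

lemma nn_integral_powr_exp_half:
  assumes "0 < s"
  shows "(\<integral>\<^sup>+ r. ennreal (indicator {0..} r * (r powr (s - 1) * exp (- r / 2))) \<partial>lborel)
           = ennreal (2 powr s * Gamma s)"
proof -
  have scale: "ennreal (indicator {0..} (0 + 2 * u) * ((0 + 2 * u) powr (s - 1) * exp (- (0 + 2 * u) / 2)))
      = ennreal (2 powr (s - 1)) * ennreal (indicator {0..} u * u powr (s - 1) / exp u)" for u :: real
    by (cases "0 \<le> u") (simp_all add: ennreal_mult'[symmetric] powr_mult exp_minus field_simps)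
  have "(\<integral>\<^sup>+ r. ennreal (indicator {0..} r * (r powr (s - 1) * exp (- r / 2))) \<partial>lborel)
      = ennreal \<bar>2\<bar> * (\<integral>\<^sup>+ u. ennreal (indicator {0..} (0 + 2 * u) *
          ((0 + 2 * u) powr (s - 1) * exp (- (0 + 2 * u) / 2))) \<partial>lborel)"
    by (rule nn_integral_real_affine) auto
  also have "\<dots> = 2 * (ennreal (2 powr (s - 1)) * ennreal (Gamma s))"
    unfolding scale using assms by (simp add: nn_integral_cmult Gamma_conv_nn_integral_real)
  also have "\<dots> = ennreal (2 powr s * Gamma s)"
    using assms by (simp add: ennreal_mult'[symmetric] powr_diff Gamma_real_pos less_imp_le
        mult.assoc[symmetric] ennreal_numeral[symmetric] del: ennreal_numeral)
  finally show ?thesis .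
qed

lemma nn_integral_powr_derivative:
  assumes "0 \<le> x" and "0 < k"
  shows "(\<integral>\<^sup>+ t. ennreal (indicator {0..x} t * (k * t powr (k - 1))) \<partial>lborel) = ennreal (x powr k)"
proof -
  have "((\<lambda>t. k * t powr (k - 1)) has_integral (x powr k - 0 powr k)) {0..x}"
  proof (rule fundamental_theorem_of_calculus_interior[OF assms(1)])
    show "continuous_on {0..x} (\<lambda>t. t powr k)"
      using assms by (intro continuous_on_powr') (auto intro: continuous_intros)
    fix t assume "t \<in> {0<..<x}"
    then show "((\<lambda>t. t powr k) has_vector_derivative k * t powr (k - 1)) (at t)"
      by (auto intro!: has_real_derivative_powr simp: has_real_derivative_iff_has_vector_derivative[symmetric])
  qed
  then show ?thesis
    using assms by (intro nn_integral_has_integral_lebesgue) auto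
qed

lemma chi2_density_nonneg: "0 < d \<Longrightarrow> 0 \<le> chi2_density d t"
  by (simp add: chi2_density_def Gamma_real_pos)

lemma ennreal_chi2_density:
  assumes "0 < d"
  shows "ennreal (chi2_density d t) = ennreal (1 / (2 powr (d / 2) * Gamma (d / 2))) *
           ennreal (indicator {0..} t * (t powr (d / 2 - 1) * exp (- t / 2)))"
proof (cases "0 < t")
  case True
  then have "chi2_density d t = 1 / (2 powr (d / 2) * Gamma (d / 2)) *
      (indicator {0..} t * (t powr (d / 2 - 1) * exp (- t / 2)))"
    by (simp add: chi2_density_def)
  then show ?thesis
    using assms True by (simp only:) (rule ennreal_mult; simp add: Gamma_real_pos)
next
  case False
  then show ?thesis by (cases "t = 0") (simp_all add: chi2_density_def)
qed

lemma nn_integral_chi2_density: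
  assumes "0 < d"
  shows "(\<integral>\<^sup>+ t. ennreal (chi2_density d t) \<partial>lborel) = 1"
proof -
  have "(\<integral>\<^sup>+ t. ennreal (chi2_density d t) \<partial>lborel) = ennreal (1 / (2 powr (d / 2) * Gamma (d / 2))) *
      (\<integral>\<^sup>+ t. ennreal (indicator {0..} t * (t powr (d / 2 - 1) * exp (- t / 2))) \<partial>lborel)"
    unfolding ennreal_chi2_density[OF assms] by (subst nn_integral_cmult) auto
  also have "\<dots> = ennreal (1 / (2 powr (d / 2) * Gamma (d / 2))) * ennreal (2 powr (d / 2) * Gamma (d / 2))"
    using assms by (subst nn_integral_powr_exp_half) auto
  also have "\<dots> = 1"
    using assms Gamma_real_pos[of "d / 2"] by (simp add: ennreal_mult'[symmetric] less_imp_neq[symmetric])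
  finally show ?thesis .
qed

lemma nn_integral_chi2_density_le_1:
  assumes "0 < d"
  shows "(\<integral>\<^sup>+ t. ennreal (indicator A t * chi2_density d t) \<partial>lborel) \<le> 1"
proof -
  have "(\<integral>\<^sup>+ t. ennreal (indicator A t * chi2_density d t) \<partial>lborel)
      \<le> (\<integral>\<^sup>+ t. ennreal (chi2_density d t) \<partial>lborel)"
    using chi2_density_nonneg[OF assms] by (intro nn_integral_mono) (simp add: indicator_def)
  then show ?thesis
    using assms by (simp add: nn_integral_chi2_density)
qed

lemma ennreal_chi2_cdf:
  assumes "0 < d"
  shows "ennreal (chi2_cdf d x) = (\<integral>\<^sup>+ t. ennreal (indicator {..x} t * chi2_density d t) \<partial>lborel)"
proof -
  have nonneg: "0 \<le> indicator {..x} t * chi2_density d t" for t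
    using chi2_density_nonneg[OF assms] by simp
  have meas: "(\<lambda>t. indicator {..x} t * chi2_density d t) \<in> borel_measurable borel"
    unfolding chi2_density_def by measurable
  have "(\<integral>\<^sup>+ t. ennreal (indicator {..x} t * chi2_density d t) \<partial>lborel) < \<top>"
    using nn_integral_chi2_density_le_1[OF assms, of "{..x}"] ennreal_one_less_top
    by (rule order.strict_trans1)
  then have "integrable lborel (\<lambda>t. indicator {..x} t * chi2_density d t)"
    using meas nonneg by (intro integrableI_nonneg) simp_all
  moreover have "chi2_cdf d x = (\<integral>t. indicator {..x} t * chi2_density d t \<partial>lborel)"
    by (simp add: chi2_cdf_def set_lebesgue_integral_def)
  ultimately show ?thesis
    using nonneg by (simp add: nn_integral_eq_integral)
qed

lemma chi2_cdf_nonneg: "0 < d \<Longrightarrow> 0 \<le> chi2_cdf d x"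
  unfolding chi2_cdf_def set_lebesgue_integral_def
  by (intro integral_nonneg_AE) (simp add: chi2_density_nonneg)

lemma chi2_cdf_le_1:
  assumes "0 < d"
  shows "chi2_cdf d x \<le> 1"
proof -
  have "ennreal (chi2_cdf d x) \<le> 1"
    unfolding ennreal_chi2_cdf[OF assms] by (rule nn_integral_chi2_density_le_1[OF assms])
  then show ?thesis by simp
qed

definition poisson_weight :: "real \<Rightarrow> nat \<Rightarrow> real" where
  "poisson_weight \<mu> j = exp (- \<mu>) * \<mu> ^ j / fact j"

lemma P_chi2_eq_poisson_mixture:
  "P_chi2 x \<delta> r = (\<Sum>j. poisson_weight (r / 2) j * chi2_cdf (\<delta> + 2 * real j) x)"
  by (simp add: P_chi2_def poisson_weight_def)

lemma poisson_weight_nonneg: "0 \<le> \<mu> \<Longrightarrow> 0 \<le> poisson_weight \<mu> j"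
  by (simp add: poisson_weight_def)

lemma poisson_weight_sums: "poisson_weight \<mu> sums 1"
proof -
  have "(\<lambda>j. \<mu> ^ j / fact j) sums exp \<mu>"
    using exp_converges[of \<mu>] by (simp add: divide_inverse mult.commute scaleR_conv_of_real)
  then have "(\<lambda>j. exp (- \<mu>) * (\<mu> ^ j / fact j)) sums (exp (- \<mu>) * exp \<mu>)"
    by (rule sums_mult)
  then show ?thesis
    by (simp add: poisson_weight_def[abs_def] exp_minus)
qed

lemma suminf_ennreal_poisson_weight:
  "0 \<le> \<mu> \<Longrightarrow> (\<Sum>j. ennreal (poisson_weight \<mu> j)) = 1"
  using poisson_weight_sums[of \<mu>]
  by (subst suminf_ennreal2) (auto simp: sums_iff poisson_weight_nonneg)

lemma summable_P_chi2_terms: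
  assumes "0 < \<delta>" and "0 \<le> r"
  shows "summable (\<lambda>j. poisson_weight (r / 2) j * chi2_cdf (\<delta> + 2 * real j) x)"
proof (rule summable_comparison_test')
  show "summable (poisson_weight (r / 2))"
    using poisson_weight_sums by (rule sums_summable)
  show "norm (poisson_weight (r / 2) j * chi2_cdf (\<delta> + 2 * real j) x) \<le> poisson_weight (r / 2) j" for j
    using assms poisson_weight_nonneg[of "r / 2" j]
      chi2_cdf_nonneg[of "\<delta> + 2 * real j" x] chi2_cdf_le_1[of "\<delta> + 2 * real j" x]
    by (simp add: abs_mult mult_left_le)
qed

lemma P_chi2_nonneg: "0 < \<delta> \<Longrightarrow> 0 \<le> r \<Longrightarrow> 0 \<le> P_chi2 x \<delta> r"
  unfolding P_chi2_eq_poisson_mixture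
  by (intro suminf_nonneg summable_P_chi2_terms) (simp_all add: poisson_weight_nonneg chi2_cdf_nonneg)

lemma ennreal_P_chi2:
  assumes "0 < \<delta>" and "0 \<le> r"
  shows "ennreal (P_chi2 x \<delta> r) = (\<Sum>j. ennreal (poisson_weight (r / 2) j * chi2_cdf (\<delta> + 2 * real j) x))"
  unfolding P_chi2_eq_poisson_mixture using assms
  by (intro suminf_ennreal2[symmetric] summable_P_chi2_terms) (simp_all add: poisson_weight_nonneg chi2_cdf_nonneg)

lemma indicator_powr_poisson_weight:
  assumes "A \<subseteq> {0..}"
  shows "indicator A r * (k * r powr (k - 1)) * poisson_weight (r / 2) j
       = k / (2 ^ j * fact j) * (indicator A r * (r powr (k + real j - 1) * exp (- r / 2)))"
proof (cases "r \<in> A")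
  case True
  then have "0 \<le> r" using assms by auto
  then have "r powr (k - 1) * r ^ j = r powr (k + real j - 1)"
    by (cases "r = 0") (auto simp: powr_add powr_realpow diff_add_eq[symmetric])
  with True show ?thesis
    by (simp add: poisson_weight_def power_divide field_simps)
qed simp

text \<open>Both sides equal \<open>k / (2^j j!) \<integral>\<^sub>0\<^sup>x t^(k+j-1) e^(-t/2) dt\<close>: on the left the integral
  over \<open>r\<close> is the Gamma integral \<open>2^(k+j) \<Gamma>(k+j)\<close>, which cancels the normalisation of the
  chi-squared distribution function with \<open>2k + 2j\<close> degrees of freedom.\<close>

lemma nn_integral_poisson_weight_chi2_cdf:
  assumes "0 < k"
  shows "(\<integral>\<^sup>+ r. ennreal (indicator {0..} r * (k * r powr (k - 1)) * poisson_weight (r / 2) j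
              * chi2_cdf (2 * k + 2 * real j) x) \<partial>lborel)
       = (\<integral>\<^sup>+ t. ennreal (indicator {0..x} t * (k * t powr (k - 1)) * poisson_weight (t / 2) j) \<partial>lborel)"
proof -
  define c where "c = k / (2 ^ j * fact j)"
  define G where "G = 2 powr (k + real j) * Gamma (k + real j)"
  define I where "I = (\<integral>\<^sup>+ t. ennreal (indicator {0..x} t * (t powr (k + real j - 1) * exp (- t / 2))) \<partial>lborel)"
  have "0 < c" "0 < G"
    using assms by (simp_all add: c_def G_def Gamma_real_pos)
  have "0 \<le> chi2_cdf (2 * k + 2 * real j) x"
    using assms by (simp add: chi2_cdf_nonneg)
  have density: "ennreal (indicator {..x} t * chi2_density (2 * k + 2 * real j) t)
      = ennreal (1 / G) * ennreal (indicator {0..x} t * (t powr (k + real j - 1) * exp (- t / 2)))" for t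
    using assms ennreal_chi2_density[of "2 * k + 2 * real j" t]
    by (cases "t \<le> x") (simp_all add: G_def indicator_def add_divide_distrib)
  have cdf: "ennreal (chi2_cdf (2 * k + 2 * real j) x) = ennreal (1 / G) * I"
    using assms by (simp add: ennreal_chi2_cdf density nn_integral_cmult I_def)
  have "(\<integral>\<^sup>+ r. ennreal (indicator {0..} r * (k * r powr (k - 1)) * poisson_weight (r / 2) j
              * chi2_cdf (2 * k + 2 * real j) x) \<partial>lborel)
      = (\<integral>\<^sup>+ r. ennreal (c * chi2_cdf (2 * k + 2 * real j) x)
              * ennreal (indicator {0..} r * (r powr (k + real j - 1) * exp (- r / 2))) \<partial>lborel)"
    using \<open>0 < c\<close> \<open>0 \<le> chi2_cdf _ x\<close>
    by (intro nn_integral_cong, subst indicator_powr_poisson_weight)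
       (simp_all add: c_def ennreal_mult'[symmetric] mult_ac)
  also have "\<dots> = ennreal c * ennreal (chi2_cdf (2 * k + 2 * real j) x) * ennreal G"
    using assms \<open>0 < c\<close> \<open>0 \<le> chi2_cdf _ x\<close>
    by (subst nn_integral_cmult, simp, subst nn_integral_powr_exp_half)
       (simp_all add: G_def ennreal_mult)
  also have "\<dots> = ennreal c * I * (ennreal (1 / G) * ennreal G)"
    unfolding cdf by (simp only: mult_ac)
  also have "\<dots> = ennreal c * I"
    using \<open>0 < G\<close> by (simp add: ennreal_mult'[symmetric])
  also have "\<dots> = (\<integral>\<^sup>+ t. ennreal (indicator {0..x} t * (k * t powr (k - 1)) * poisson_weight (t / 2) j) \<partial>lborel)"
    unfolding I_def using \<open>0 < c\<close>
    by (subst nn_integral_cmult[symmetric], simp, intro nn_integral_cong, subst indicator_powr_poisson_weight)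
       (simp_all add: c_def ennreal_mult'[symmetric])
  finally show ?thesis .
qed

lemma nn_integral_powr_P_chi2:
  assumes "0 < k" and "0 \<le> x"
  shows "(\<integral>\<^sup>+ r. ennreal (indicator {0..} r * (k * r powr (k - 1)) * P_chi2 x (2 * k) r) \<partial>lborel)
       = ennreal (x powr k)"
proof -
  have expand: "ennreal (indicator {0..} r * (k * r powr (k - 1)) * P_chi2 x (2 * k) r)
      = (\<Sum>j. ennreal (indicator {0..} r * (k * r powr (k - 1)) * poisson_weight (r / 2) j
              * chi2_cdf (2 * k + 2 * real j) x))" for r
  proof (cases "0 \<le> r")
    case True
    have w: "0 \<le> indicator {0..} r * (k * r powr (k - 1))"
      using assms by simp
    have "ennreal (indicator {0..} r * (k * r powr (k - 1)) * P_chi2 x (2 * k) r)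
        = ennreal (indicator {0..} r * (k * r powr (k - 1))) * ennreal (P_chi2 x (2 * k) r)"
      using assms True w by (intro ennreal_mult P_chi2_nonneg) simp_all
    also have "\<dots> = (\<Sum>j. ennreal (indicator {0..} r * (k * r powr (k - 1)))
        * ennreal (poisson_weight (r / 2) j * chi2_cdf (2 * k + 2 * real j) x))"
      using assms True by (simp add: ennreal_P_chi2 ennreal_suminf_cmult)
    also have "\<dots> = (\<Sum>j. ennreal (indicator {0..} r * (k * r powr (k - 1)) * poisson_weight (r / 2) j
              * chi2_cdf (2 * k + 2 * real j) x))"
      using assms True w
      by (intro suminf_cong, subst ennreal_mult[symmetric])
         (simp_all add: mult.assoc poisson_weight_nonneg chi2_cdf_nonneg)
    finally show ?thesis .
  qed simp
  have collapse: "(\<Sum>j. ennreal (indicator {0..x} t * (k * t powr (k - 1)) * poisson_weight (t / 2) j))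
      = ennreal (indicator {0..x} t * (k * t powr (k - 1)))" for t
  proof (cases "0 \<le> t")
    case True
    have w: "0 \<le> indicator {0..x} t * (k * t powr (k - 1))"
      using assms by simp
    have "(\<Sum>j. ennreal (indicator {0..x} t * (k * t powr (k - 1)) * poisson_weight (t / 2) j))
        = (\<Sum>j. ennreal (indicator {0..x} t * (k * t powr (k - 1))) * ennreal (poisson_weight (t / 2) j))"
      using True w by (intro suminf_cong ennreal_mult poisson_weight_nonneg) simp_all
    also have "\<dots> = ennreal (indicator {0..x} t * (k * t powr (k - 1)))"
      using True by (simp only: ennreal_suminf_cmult suminf_ennreal_poisson_weight) simp
    finally show ?thesis .
  qed (simp add: indicator_def)
  have "(\<integral>\<^sup>+ r. ennreal (indicator {0..} r * (k * r powr (k - 1)) * P_chi2 x (2 * k) r) \<partial>lborel)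
      = (\<Sum>j. \<integral>\<^sup>+ r. ennreal (indicator {0..} r * (k * r powr (k - 1)) * poisson_weight (r / 2) j
              * chi2_cdf (2 * k + 2 * real j) x) \<partial>lborel)"
    unfolding expand by (rule nn_integral_suminf) (simp add: poisson_weight_def)
  also have "\<dots> = (\<Sum>j. \<integral>\<^sup>+ t. ennreal (indicator {0..x} t * (k * t powr (k - 1)) * poisson_weight (t / 2) j) \<partial>lborel)"
    using assms by (simp add: nn_integral_poisson_weight_chi2_cdf)
  also have "\<dots> = (\<integral>\<^sup>+ t. ennreal (indicator {0..x} t * (k * t powr (k - 1))) \<partial>lborel)"
    unfolding collapse[symmetric] by (rule nn_integral_suminf[symmetric]) (simp add: poisson_weight_def)
  also have "\<dots> = ennreal (x powr k)"
    by (rule nn_integral_powr_derivative[OF assms(2,1)])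
  finally show ?thesis .
qed

lemma nn_integral_powr_layer_cake:
  assumes "sigma_finite_measure M" and [measurable]: "R \<in> borel_measurable M"
    and "\<forall>\<omega>\<in>space M. 0 \<le> R \<omega>" and "0 < k"
  shows "(\<integral>\<^sup>+\<omega>. ennreal (R \<omega> powr k) \<partial>M) =
    (\<integral>\<^sup>+ r. ennreal (indicator {0..} r * (k * r powr (k - 1))) * emeasure M {\<omega>\<in>space M. r \<le> R \<omega>} \<partial>lborel)"
proof -
  interpret pair_sigma_finite M lborel
    using assms(1) by (simp add: pair_sigma_finite.intro lborel.sigma_finite_measure_axioms)
  define f where "f \<omega> r = ennreal (if 0 \<le> r \<and> r \<le> R \<omega> then k * r powr (k - 1) else 0)" for \<omega> r
  have "(\<integral>\<^sup>+\<omega>. ennreal (R \<omega> powr k) \<partial>M) = (\<integral>\<^sup>+\<omega>. (\<integral>\<^sup>+ r. f \<omega> r \<partial>lborel) \<partial>M)"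
  proof (rule nn_integral_cong)
    fix \<omega> assume "\<omega> \<in> space M"
    then have "0 \<le> R \<omega>" using assms(3) by auto
    have "(\<integral>\<^sup>+ r. f \<omega> r \<partial>lborel) = (\<integral>\<^sup>+ t. ennreal (indicator {0..R \<omega>} t * (k * t powr (k - 1))) \<partial>lborel)"
      by (intro nn_integral_cong) (auto simp: f_def indicator_def)
    also have "\<dots> = ennreal (R \<omega> powr k)"
      using \<open>0 \<le> R \<omega>\<close> assms(4) by (rule nn_integral_powr_derivative)
    finally show "ennreal (R \<omega> powr k) = (\<integral>\<^sup>+ r. f \<omega> r \<partial>lborel)" ..
  qed
  also have "\<dots> = (\<integral>\<^sup>+ r. (\<integral>\<^sup>+\<omega>. f \<omega> r \<partial>M) \<partial>lborel)"
    by (rule Fubini'[symmetric]) (simp add: f_def split_beta')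
  also have "\<dots> = (\<integral>\<^sup>+ r. ennreal (indicator {0..} r * (k * r powr (k - 1))) * emeasure M {\<omega>\<in>space M. r \<le> R \<omega>} \<partial>lborel)"
  proof (rule nn_integral_cong)
    fix r :: real
    have "(\<integral>\<^sup>+\<omega>. f \<omega> r \<partial>M) = (\<integral>\<^sup>+\<omega>. ennreal (indicator {0..} r * (k * r powr (k - 1)))
        * indicator {\<omega>\<in>space M. r \<le> R \<omega>} \<omega> \<partial>M)"
      using assms(4) by (intro nn_integral_cong) (auto simp: f_def indicator_def)
    also have "\<dots> = ennreal (indicator {0..} r * (k * r powr (k - 1))) * emeasure M {\<omega>\<in>space M. r \<le> R \<omega>}"
      by (rule nn_integral_cmult_indicator) measurable
    finally show "(\<integral>\<^sup>+\<omega>. f \<omega> r \<partial>M) = \<dots>" .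
  qed
  finally show ?thesis .
qed

lemma has_bochner_integral_powr_of_chi2_tail:
  assumes "prob_space M" and "R \<in> borel_measurable M" and "\<forall>\<omega>\<in>space M. 0 \<le> R \<omega>"
    and "0 < k" and "0 \<le> x"
    and tail: "\<forall>r>0. measure M {\<omega>\<in>space M. r \<le> R \<omega>} = P_chi2 x (2 * k) r"
  shows "has_bochner_integral M (\<lambda>\<omega>. R \<omega> powr k) (x powr k)"
proof (rule has_bochner_integral_nn_integral)
  interpret prob_space M by fact
  have tail_density: "ennreal (indicator {0..} r * (k * r powr (k - 1))) * emeasure M {\<omega>\<in>space M. r \<le> R \<omega>}
      = ennreal (indicator {0..} r * (k * r powr (k - 1)) * P_chi2 x (2 * k) r)" for r
  proof (cases "0 < r")
    case True
    then show ?thesis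
      using assms by (simp add: emeasure_eq_measure ennreal_mult P_chi2_nonneg)
  next
    case False
    then have "indicator {0..} r * (k * r powr (k - 1)) = (0 :: real)"
      by (cases "r = 0") (simp_all add: indicator_def)
    then show ?thesis by (simp only: mult_zero_left ennreal_0)
  qed
  have "(\<integral>\<^sup>+\<omega>. ennreal (R \<omega> powr k) \<partial>M) =
    (\<integral>\<^sup>+ r. ennreal (indicator {0..} r * (k * r powr (k - 1))) * emeasure M {\<omega>\<in>space M. r \<le> R \<omega>} \<partial>lborel)"
    using prob_space_imp_sigma_finite[OF assms(1)] assms(2-4) by (rule nn_integral_powr_layer_cake)
  also have "\<dots> = ennreal (x powr k)"
    unfolding tail_density using assms(4,5) by (rule nn_integral_powr_P_chi2)
  finally show "(\<integral>\<^sup>+\<omega>. ennreal (R \<omega> powr k) \<partial>M) = ennreal (x powr k)" .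
qed (use assms in simp_all)

lemma powr_le_powr_iff:
  fixes x y p :: real
  assumes "0 < p" and "0 \<le> x" and "0 \<le> y"
  shows "x powr p \<le> y powr p \<longleftrightarrow> x \<le> y"
  using assms by (meson not_le powr_less_mono2 powr_mono2 less_imp_le)

lemma tail_powr_scale_iff:
  fixes \<mu> :: "'a set \<Rightarrow> 'b" and F :: "'a \<Rightarrow> real"
  assumes "0 < p" and "0 < C" and "\<forall>\<omega>\<in>S. 0 \<le> F \<omega>"
  shows "(\<forall>y>0. \<mu> {\<omega>\<in>S. y \<le> F \<omega>} = G (y powr p / C))
     \<longleftrightarrow> (\<forall>r>0. \<mu> {\<omega>\<in>S. r \<le> F \<omega> powr p / C} = G r)"
proof -
  have sets: "{\<omega>\<in>S. y \<le> F \<omega>} = {\<omega>\<in>S. y powr p / C \<le> F \<omega> powr p / C}" if "0 < y" for y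
    using assms that by (auto simp: divide_le_cancel powr_le_powr_iff)
  show ?thesis
  proof (intro iffI allI impI)
    fix r :: real
    assume tail: "\<forall>y>0. \<mu> {\<omega>\<in>S. y \<le> F \<omega>} = G (y powr p / C)" and "0 < r"
    define y where "y = (C * r) powr (1 / p)"
    have "0 < y" and r_eq: "y powr p / C = r"
      using assms \<open>0 < r\<close> by (simp_all add: y_def powr_powr)
    then show "\<mu> {\<omega>\<in>S. r \<le> F \<omega> powr p / C} = G r"
      using tail[rule_format, OF \<open>0 < y\<close>] sets[OF \<open>0 < y\<close>] by (simp add: r_eq)
  next
    fix y :: real
    assume "\<forall>r>0. \<mu> {\<omega>\<in>S. r \<le> F \<omega> powr p / C} = G r" and "0 < y"
    then show "\<mu> {\<omega>\<in>S. y \<le> F \<omega>} = G (y powr p / C)"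
      using sets[of y] assms by simp
  qed
qed

lemma one_minus_beta'_eq:
  fixes \<beta> \<rho> :: real
  assumes "0 < \<beta>" and "\<beta> < 1" and "\<rho>\<^sup>2 < 1"
  shows "1 - \<beta> / (1 - (1 - \<beta>) * \<rho>\<^sup>2) = (1 - \<beta>) * (sqrt (1 - \<rho>\<^sup>2))\<^sup>2 / (1 - (1 - \<beta>) * \<rho>\<^sup>2)"
    and "0 < 1 - \<beta> / (1 - (1 - \<beta>) * \<rho>\<^sup>2)"
    and "(1 - (1 - \<beta>) * \<rho>\<^sup>2) / ((1 - \<beta>) * (sqrt (1 - \<rho>\<^sup>2))\<^sup>2) = 1 / (1 - \<beta> / (1 - (1 - \<beta>) * \<rho>\<^sup>2))"
proof -
  have "(1 - \<beta>) * \<rho>\<^sup>2 < 1"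
    using assms mult_strict_mono[of "1 - \<beta>" 1 "\<rho>\<^sup>2" 1] by (cases "\<rho> = 0") auto
  then show eq: "1 - \<beta> / (1 - (1 - \<beta>) * \<rho>\<^sup>2) = (1 - \<beta>) * (sqrt (1 - \<rho>\<^sup>2))\<^sup>2 / (1 - (1 - \<beta>) * \<rho>\<^sup>2)"
    using assms by (simp add: field_simps)
  show "0 < 1 - \<beta> / (1 - (1 - \<beta>) * \<rho>\<^sup>2)"
    unfolding eq using assms \<open>(1 - \<beta>) * \<rho>\<^sup>2 < 1\<close> by simp
  show "(1 - (1 - \<beta>) * \<rho>\<^sup>2) / ((1 - \<beta>) * (sqrt (1 - \<rho>\<^sup>2))\<^sup>2) = 1 / (1 - \<beta> / (1 - (1 - \<beta>) * \<rho>\<^sup>2))"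
    unfolding eq by simp
qed

lemma powr_exponent_change:
  fixes b b' z :: real
  assumes "0 < b" and "0 < b'" and "0 \<le> z"
  shows "((b' / b * z powr b) powr (1 / b')) powr (2 * b') / b'\<^sup>2 = z powr (2 * b) / b\<^sup>2"
    and "z = (b / b') powr (1 / b) * ((b' / b * z powr b) powr (1 / b')) powr (b' / b)"
proof -
  have "((b' / b * z powr b) powr (1 / b')) powr (2 * b') = (b' / b * z powr b) powr 2"
    using assms by (simp add: powr_powr)
  also have "\<dots> = (b' / b)\<^sup>2 * (z powr b) powr 2"
    using assms by (simp add: powr_numeral power_mult_distrib power_divide)
  also have "\<dots> = (b' / b)\<^sup>2 * z powr (2 * b)"
    by (simp add: powr_powr mult.commute)
  finally have "((b' / b * z powr b) powr (1 / b')) powr (2 * b') = (b' / b)\<^sup>2 * z powr (2 * b)" .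
  then show "((b' / b * z powr b) powr (1 / b')) powr (2 * b') / b'\<^sup>2 = z powr (2 * b) / b\<^sup>2"
    using assms by (simp add: field_simps power2_eq_square)
  have "((b' / b * z powr b) powr (1 / b')) powr (b' / b) = (b' / b * z powr b) powr (1 / b)"
    using assms by (simp add: powr_powr)
  also have "\<dots> = (b' / b) powr (1 / b) * (z powr b) powr (1 / b)"
    by (rule powr_mult)
  also have "(z powr b) powr (1 / b) = z"
    using assms by (simp add: powr_powr)
  finally have "((b' / b * z powr b) powr (1 / b')) powr (b' / b) = (b' / b) powr (1 / b) * z" .
  then show "z = (b / b') powr (1 / b) * ((b' / b * z powr b) powr (1 / b')) powr (b' / b)"
    using assms by (simp add: powr_mult[symmetric])
qed

lemma tail_powr_transfer:
  fixes \<mu> :: "'a set \<Rightarrow> 'b" and F Y :: "'a \<Rightarrow> real"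
  assumes "0 < p" "0 < C" "0 < q" "0 < D"
    and "\<forall>\<omega>\<in>S. 0 \<le> F \<omega>" "\<forall>\<omega>\<in>S. 0 \<le> Y \<omega>"
    and "\<forall>\<omega>\<in>S. Y \<omega> powr q / D = F \<omega> powr p / C"
    and "\<forall>y>0. \<mu> {\<omega>\<in>S. y \<le> F \<omega>} = G (y powr p / C)"
  shows "\<forall>y>0. \<mu> {\<omega>\<in>S. y \<le> Y \<omega>} = G (y powr q / D)"
proof -
  have "{\<omega>\<in>S. r \<le> Y \<omega> powr q / D} = {\<omega>\<in>S. r \<le> F \<omega> powr p / C}" for r
    using assms(7) by auto
  moreover have "\<forall>r>0. \<mu> {\<omega>\<in>S. r \<le> F \<omega> powr p / C} = G r"
    using tail_powr_scale_iff[OF assms(1,2,5)] assms(8) by blast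
  ultimately have "\<forall>r>0. \<mu> {\<omega>\<in>S. r \<le> Y \<omega> powr q / D} = G r"
    by simp
  then show ?thesis
    using tail_powr_scale_iff[OF assms(3,4,6)] by blast
qed

lemma has_bochner_integral_powr_of_scaled_chi2_tail:
  assumes "prob_space M" and "F \<in> borel_measurable M" and "\<forall>\<omega>\<in>space M. 0 \<le> F \<omega>"
    and "0 < p" and "0 < C" and "0 < k" and "0 \<le> x"
    and "\<forall>y>0. measure M {\<omega>\<in>space M. y \<le> F \<omega>} = P_chi2 x (2 * k) (y powr p / C)"
  shows "has_bochner_integral M (\<lambda>\<omega>. F \<omega> powr (p * k)) ((C * x) powr k)"
proof -
  have "has_bochner_integral M (\<lambda>\<omega>. (F \<omega> powr p / C) powr k) (x powr k)"
  proof (rule has_bochner_integral_powr_of_chi2_tail[OF assms(1)])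
    show "(\<lambda>\<omega>. F \<omega> powr p / C) \<in> borel_measurable M"
      using assms(2) by measurable
    show "\<forall>r>0. measure M {\<omega>\<in>space M. r \<le> F \<omega> powr p / C} = P_chi2 x (2 * k) r"
      using tail_powr_scale_iff[OF assms(4,5,3)] assms(8) by blast
  qed (use assms in simp_all)
  then have "has_bochner_integral M (\<lambda>\<omega>. C powr k * (F \<omega> powr p / C) powr k) (C powr k * x powr k)"
    by (rule has_bochner_integral_mult_right)
  moreover have "C powr k * (F \<omega> powr p / C) powr k = F \<omega> powr (p * k)" if "\<omega> \<in> space M" for \<omega>
    using assms(3,5) that by (simp add: powr_divide powr_powr)
  ultimately show ?thesis
    using assms(5,7) by (simp add: powr_mult cong: has_bochner_integral_cong)
qed

theorem mainTheorem7:
  fixes M :: "'s measure" and F :: "'s \<Rightarrow> real"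
    and \<beta> \<rho> V a :: real
  assumes "prob_space M"
    and "F \<in> borel_measurable M"
    and "\<forall>\<omega>\<in>space M. 0 \<le> F \<omega>"
    and "0 < \<beta>" "\<beta> < 1" "-1 < \<rho>" "\<rho> < 1" "0 < V"
    and "\<forall>y>0. measure M {\<omega>\<in>space M. F \<omega> \<ge> y} =
           P_chi2 (a\<^sup>2 / ((1 - \<beta>)\<^sup>2 * V))
                  ((1 - (1 - \<beta>) * \<rho>\<^sup>2) / ((1 - \<beta>) * (sqrt (1 - \<rho>\<^sup>2))\<^sup>2))
                  (y powr (2 * (1 - \<beta>)) / ((1 - \<beta>)\<^sup>2 * V))"
  shows "let b = 1 - \<beta>; \<rho>' = sqrt (1 - \<rho>\<^sup>2);
             \<beta>' = \<beta> / (1 - b * \<rho>\<^sup>2); b' = 1 - \<beta>';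
             Fbar = \<bar>b' / b * a\<bar> powr (1 / b');
             Y = (\<lambda>\<omega>. (b' / b * F \<omega> powr b) powr (1 / b'))
         in b' = b * \<rho>'\<^sup>2 / (1 - b * \<rho>\<^sup>2)
          \<and> (\<forall>y'>0. measure M {\<omega>\<in>space M. Y \<omega> \<ge> y'} =
                 P_chi2 (Fbar powr (2 * b') / (b'\<^sup>2 * V)) (1 / b') (y' powr (2 * b') / (b'\<^sup>2 * V)))
          \<and> (\<forall>\<omega>\<in>space M. F \<omega> = (b / b') powr (1 / b) * Y \<omega> powr (b' / b))
          \<and> integrable M (\<lambda>\<omega>. F \<omega> powr (b / b'))
          \<and> (\<integral>\<omega>. F \<omega> powr (b / b') \<partial>M) = \<bar>a\<bar> powr (1 / b')"
proof -
  define b where "b = 1 - \<beta>"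
  define b' where "b' = 1 - \<beta> / (1 - b * \<rho>\<^sup>2)"
  define Y where "Y \<omega> = (b' / b * F \<omega> powr b) powr (1 / b')" for \<omega>
  define x0 where "x0 = a\<^sup>2 / (b\<^sup>2 * V)"
  have "0 < b" "\<rho>\<^sup>2 < 1"
    using assms(4-7) by (simp_all add: b_def abs_square_less_1)
  have b'_eq: "b' = b * (sqrt (1 - \<rho>\<^sup>2))\<^sup>2 / (1 - b * \<rho>\<^sup>2)" and "0 < b'"
    and degrees: "(1 - b * \<rho>\<^sup>2) / (b * (sqrt (1 - \<rho>\<^sup>2))\<^sup>2) = 1 / b'"
    using one_minus_beta'_eq[OF assms(4,5) \<open>\<rho>\<^sup>2 < 1\<close>] by (simp_all add: b_def b'_def)
  have F_tail: "\<forall>y>0. measure M {\<omega>\<in>space M. y \<le> F \<omega>} = P_chi2 x0 (1 / b') (y powr (2 * b) / (b\<^sup>2 * V))"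
    using assms(9) unfolding degrees[symmetric] by (simp add: x0_def b_def)
  have Y_rescaled: "Y \<omega> powr (2 * b') / (b'\<^sup>2 * V) = F \<omega> powr (2 * b) / (b\<^sup>2 * V)"
    and F_eq: "F \<omega> = (b / b') powr (1 / b) * Y \<omega> powr (b' / b)" if "\<omega> \<in> space M" for \<omega>
  proof -
    have "0 \<le> F \<omega>" using assms(3) that by simp
    note change = powr_exponent_change[OF \<open>0 < b\<close> \<open>0 < b'\<close> this, folded Y_def]
    show "Y \<omega> powr (2 * b') / (b'\<^sup>2 * V) = F \<omega> powr (2 * b) / (b\<^sup>2 * V)"
      by (simp only: divide_divide_eq_left[symmetric] change(1))
    show "F \<omega> = (b / b') powr (1 / b) * Y \<omega> powr (b' / b)"
      by (rule change(2))
  qed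
  have Y_tail: "\<forall>y'>0. measure M {\<omega>\<in>space M. y' \<le> Y \<omega>} = P_chi2 x0 (1 / b') (y' powr (2 * b') / (b'\<^sup>2 * V))"
  proof (rule tail_powr_transfer[OF _ _ _ _ assms(3) _ _ F_tail])
    show "\<forall>\<omega>\<in>space M. Y \<omega> powr (2 * b') / (b'\<^sup>2 * V) = F \<omega> powr (2 * b) / (b\<^sup>2 * V)"
      using Y_rescaled by blast
  qed (use \<open>0 < b\<close> \<open>0 < b'\<close> assms(8) in \<open>simp_all add: Y_def\<close>)
  have Fbar: "(\<bar>b' / b * a\<bar> powr (1 / b')) powr (2 * b') / (b'\<^sup>2 * V) = x0"
    using \<open>0 < b\<close> \<open>0 < b'\<close> by (simp add: powr_powr x0_def power_mult_distrib power_divide field_simps)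
  have "has_bochner_integral M (\<lambda>\<omega>. F \<omega> powr (2 * b * (1 / (2 * b')))) ((b\<^sup>2 * V * x0) powr (1 / (2 * b')))"
  proof (rule has_bochner_integral_powr_of_scaled_chi2_tail[OF assms(1-3)])
    show "\<forall>y>0. measure M {\<omega>\<in>space M. y \<le> F \<omega>} = P_chi2 x0 (2 * (1 / (2 * b'))) (y powr (2 * b) / (b\<^sup>2 * V))"
      using F_tail by simp
  qed (use \<open>0 < b\<close> \<open>0 < b'\<close> assms(8) in \<open>simp_all add: x0_def\<close>)
  moreover have "b\<^sup>2 * V * x0 = \<bar>a\<bar> powr 2"
    using \<open>0 < b\<close> assms(8) by (simp add: x0_def powr_numeral)
  moreover have "(\<bar>a\<bar> powr 2) powr (1 / (2 * b')) = \<bar>a\<bar> powr (1 / b')"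
    unfolding powr_powr by simp
  ultimately have moment: "has_bochner_integral M (\<lambda>\<omega>. F \<omega> powr (b / b')) (\<bar>a\<bar> powr (1 / b'))"
    by (simp only:) simp
  show ?thesis
    unfolding Let_def b_def[symmetric] b'_def[symmetric] Y_def[symmetric]
    using b'_eq Y_tail Fbar F_eq moment[unfolded has_bochner_integral_iff] by simp
qed

end
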